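(* Let $\alpha\in\mathbb{N}_0$. For $k\in\mathbb{N}$ let $\Gamma_k^{(\alpha)}$ have density $L_\alpha^{(k-\alpha-1)}(x)^2x^{k-\alpha-1}e^{-x}\mathbf{1}_{x\ge0}$ and let $\Gamma_k$ be gamma-distributed with shape $k$ and rate $1$. Then for all $k\in\mathbb{N}$ and $R>0$ with $k\ge R>2\alpha+2$, \[ \mathbb{P}\bigl[\Gamma_k^{(\alpha)}\le R\bigr]\le3^{2\alpha+1}R^{\alpha+1}\,\mathbb{P}\bigl[\Gamma_{k-2\alpha-2}\le R\bigr], \] and for all $k\in\mathbb{N}$ and $R$ with $1\le k\le R$, \[ \mathbb{P}\bigl[\Gamma_k^{(\alpha)}\ge R\bigr]\le4^\alpha k^\alpha\,\mathbb{P}\bigl[\Gamma_{k+\alpha}\ge R\bigr]. \]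
   Context: For $\beta\ge-\alpha$, $L_\alpha^{(\beta)}$ is the generalized Laguerre polynomial of degree $\alpha$ normalized so that $\int_0^\infty L_\alpha^{(\beta)}(x)^2x^\beta e^{-x}\mathrm{d}x=1$; explicitly $L_\alpha^{(\beta)}(x)=\sqrt{\frac{\alpha!}{\Gamma(\beta+\alpha+1)}}\sum_{\ell=0}^\alpha\binom{\alpha+\beta}{\alpha-\ell}\frac{(-x)^\ell}{\ell!}$ (up to sign). *)

theory Defs
  imports "HOL-Probability.Probability"
begin

definition laguerre :: "nat \<Rightarrow> real \<Rightarrow> real \<Rightarrow> real" where
  "laguerre \<alpha> \<beta> x =
     sqrt (fact \<alpha> / Gamma (\<beta> + real \<alpha> + 1)) *
     (\<Sum>l=0..\<alpha>. ((real \<alpha> + \<beta>) gchoose (\<alpha> - l)) * (- x) ^ l / fact l)"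

definition laguerre_gamma_density :: "nat \<Rightarrow> nat \<Rightarrow> real \<Rightarrow> real" where
  "laguerre_gamma_density \<alpha> k x =
     (if x \<ge> 0 then (laguerre \<alpha> (real k - real \<alpha> - 1) x)\<^sup>2
        * x powi (int k - int \<alpha> - 1) * exp (- x) else 0)"

(* Gamma distribution with shape k (k >= 1) and rate 1 = Erlang(k-1, 1) in the library *)
definition gamma_density :: "nat \<Rightarrow> real \<Rightarrow> real" where
  "gamma_density k x = erlang_density (k - 1) 1 x"

definition laguerre_gamma_distr :: "nat \<Rightarrow> nat \<Rightarrow> real measure" where
  "laguerre_gamma_distr \<alpha> k = density lborel (\<lambda>x. ennreal (laguerre_gamma_density \<alpha> k x))"

definition gamma_distr :: "nat \<Rightarrow> real measure" where
  "gamma_distr k = density lborel (\<lambda>x. ennreal (gamma_density k x))"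

end

theory Submission
  imports Defs
begin

(* For k \<ge> 1 the density of Gamma_k^(alpha) is alpha!/(k-1)! S(x)^2 x^(k-alpha-1) e^(-x), where
   S(x) = sum_l C(k-1, alpha-l) (-x)^l / l!, and |S(x)| \<le> (2B)^alpha / alpha! as soon as x and
   k - 1 are at most B.  Taking B = x \<ge> k on the upper tail and B = k \<ge> x on the lower tail, the
   density is dominated pointwise by a multiple of the Gamma density of shape k + alpha, resp.
   k - 2 alpha - 2.  The multiples are controlled by the factorial inequalities
   (k+alpha-1)! \<le> alpha! k^alpha (k-1)!  and  4^alpha k^(2alpha+1) (k-2alpha-3)! \<le> 3^(2alpha+1) alpha! (k-1)!;
   the latter is monotone in k and, at k = 2 alpha + 3, follows by induction on alpha from
   (1 + 2/K)^K \<le> e^2 \<le> 9. *)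

lemma fact_add_le: "fact (n + a) \<le> fact a * (n + 1) ^ a * (fact n :: nat)"
proof (induction a)
  case 0
  then show ?case by simp
next
  case (Suc a)
  have "n + a + 1 \<le> (a + 1) * (n + 1)" by simp
  then have "fact (n + Suc a) \<le> (a + 1) * (n + 1) * (fact (n + a) :: nat)"
    by (simp add: mult_right_mono)
  also have "\<dots> \<le> (a + 1) * (n + 1) * (fact a * (n + 1) ^ a * fact n)"
    using Suc.IH by (intro mult_left_mono) auto
  also have "\<dots> = fact (Suc a) * (n + 1) ^ Suc a * fact n"
    by (simp add: algebra_simps)
  finally show ?case .
qed

lemma power_times_diff_le:
  fixes x :: real
  assumes "0 \<le> x"
  shows "(x + 1) ^ m * (x - real m) \<le> x ^ Suc m"
proof (induction m)
  case 0
  then show ?case by simp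
next
  case (Suc m)
  have "(x + 1) ^ Suc m * (x - real (Suc m)) = (x + 1) ^ m * ((x + 1) * (x - real m - 1))"
    by (simp add: algebra_simps)
  also have "\<dots> \<le> (x + 1) ^ m * (x * (x - real m))"
    using assms by (intro mult_left_mono) (auto simp: algebra_simps)
  also have "\<dots> = x * ((x + 1) ^ m * (x - real m))" by (simp add: algebra_simps)
  also have "\<dots> \<le> x * x ^ Suc m"
    using Suc.IH assms by (intro mult_left_mono)
  finally show ?case by simp
qed

lemma power_add_two_le:
  assumes "0 < n"
  shows "(real n + 2) ^ n \<le> 9 * real n ^ n"
proof -
  have "(1 + 2 / real n) ^ n \<le> exp 2"
    using assms by (intro exp_ge_one_plus_x_over_n_power_n) auto
  also have "\<dots> = exp 1 ^ 2" by (simp flip: exp_of_nat_mult)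
  also have "\<dots> \<le> 3 ^ 2" using exp_le by (intro power_mono) auto
  finally have "(1 + 2 / real n) ^ n \<le> 9" by simp
  moreover have "(real n + 2) ^ n = real n ^ n * (1 + 2 / real n) ^ n"
    using assms by (simp add: field_simps flip: power_mult_distrib)
  ultimately show ?thesis
    by (metis mult.commute mult_left_mono zero_le_power of_nat_0_le_iff)
qed

lemma lower_tail_constant_base:
  "4 ^ a * real (2 * a + 3) ^ (2 * a + 1) \<le> 3 ^ (2 * a + 1) * fact a * fact (2 * a + 2)"
proof (cases "a \<le> 3")
  case True
  then consider "a = 0" | "a = 1" | "a = 2" | "a = 3" by linarith
  then show ?thesis by cases (simp_all add: fact_numeral)
next
  case False
  then have "3 \<le> a" by simp
  then show ?thesis
  proof (induction a rule: nat_induct_at_least)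
    case base
    then show ?case by (simp add: fact_numeral)
  next
    case (Suc b)
    define K where "K = 2 * b + 3"
    have "3 * (2 * b) \<le> b * (2 * b)"
      using \<open>3 \<le> b\<close> by (rule mult_right_mono) simp
    then have "4 * (2 * b + 3) \<le> b * (2 * b) + 6 * b + 4"
      using \<open>3 \<le> b\<close> by arith
    also have "\<dots> = (b + 1) * (2 * b + 4)"
      by (simp add: algebra_simps)
    finally have "4 * K \<le> (b + 1) * (2 * b + 4)"
      unfolding K_def .
    then have "real (4 * K) \<le> real ((b + 1) * (2 * b + 4))"
      by (simp only: of_nat_le_iff)
    then have "9 * real (4 * K) * real K \<le> 9 * real ((b + 1) * (2 * b + 4)) * real K"
      by (intro mult_right_mono) auto
    then have K_le: "36 * real K ^ 2 \<le> 9 * real ((b + 1) * (2 * b + 4)) * real K"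
      by (simp add: power2_eq_square)
    have "4 ^ Suc b * real (2 * Suc b + 3) ^ (2 * Suc b + 1) = 4 * 4 ^ b * (real K + 2) ^ K"
      by (simp add: K_def power_add power3_eq_cube)
    also have "\<dots> \<le> 4 * 4 ^ b * (9 * real K ^ K)"
      using power_add_two_le[of K] by (intro mult_left_mono) (auto simp: K_def)
    also have "\<dots> = 36 * real K ^ 2 * (4 ^ b * real (2 * b + 3) ^ (2 * b + 1))"
      by (simp add: K_def power_add flip: power_Suc2)
    also have "\<dots> \<le> 36 * real K ^ 2 * (3 ^ (2 * b + 1) * fact b * fact (2 * b + 2))"
      using Suc.IH by (intro mult_left_mono) auto
    also have "\<dots> \<le> 9 * real ((b + 1) * (2 * b + 4)) * real K * (3 ^ (2 * b + 1) * fact b * fact (2 * b + 2))"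
      using K_le by (intro mult_right_mono) auto
    also have "\<dots> = 3 ^ (2 * Suc b + 1) * fact (Suc b) * fact (2 * Suc b + 2)"
      by (simp add: K_def fact_Suc algebra_simps)
    finally show ?case .
  qed
qed

lemma lower_tail_constant:
  "4 ^ a * real (d + 2 * a + 3) ^ (2 * a + 1) * fact d \<le> 3 ^ (2 * a + 1) * fact a * fact (d + 2 * a + 2)"
proof (induction d)
  case 0
  then show ?case using lower_tail_constant_base[of a] by simp
next
  case (Suc d)
  define K where "K = real (d + 2 * a + 3)"
  have "(K + 1) ^ (2 * a + 1) * real (Suc d) \<le> (K + 1) ^ (2 * a + 1) * (K - real (2 * a + 1))"
    by (intro mult_left_mono) (auto simp: K_def)
  also have "\<dots> \<le> K ^ (2 * a + 1) * K"
    using power_times_diff_le[of K "2 * a + 1"] by (simp add: K_def mult.commute)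
  finally have step: "(K + 1) ^ (2 * a + 1) * real (Suc d) \<le> K ^ (2 * a + 1) * K" .
  have "4 ^ a * real (Suc d + 2 * a + 3) ^ (2 * a + 1) * fact (Suc d)
      = 4 ^ a * fact d * ((K + 1) ^ (2 * a + 1) * real (Suc d))"
    by (simp add: K_def fact_Suc algebra_simps)
  also have "\<dots> \<le> 4 ^ a * fact d * (K ^ (2 * a + 1) * K)"
    using step by (intro mult_left_mono) auto
  also have "\<dots> = (4 ^ a * real (d + 2 * a + 3) ^ (2 * a + 1) * fact d) * K"
    by (simp add: K_def algebra_simps)
  also have "\<dots> \<le> (3 ^ (2 * a + 1) * fact a * fact (d + 2 * a + 2)) * K"
    using Suc.IH by (intro mult_right_mono) (auto simp: K_def)
  also have "\<dots> = 3 ^ (2 * a + 1) * fact a * fact (Suc d + 2 * a + 2)"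
    by (simp add: K_def fact_Suc algebra_simps)
  finally show ?case .
qed

definition laguerre_sum :: "nat \<Rightarrow> nat \<Rightarrow> real \<Rightarrow> real" where
  "laguerre_sum a n x = (\<Sum>l=0..a. real (n choose (a - l)) * (- x) ^ l / fact l)"

lemma laguerre_eq_laguerre_sum:
  "laguerre a (real n - real a) x = sqrt (fact a / fact n) * laguerre_sum a n x"
proof -
  have "Gamma (real n - real a + real a + 1) = fact n"
    using Gamma_fact[of n] by (simp add: add.commute)
  then show ?thesis
    by (simp add: laguerre_def laguerre_sum_def binomial_gbinomial)
qed

lemma choose_le_power_div_fact: "real (n choose j) \<le> real n ^ j / fact j"
proof -
  have "real ((n choose j) * fact j) \<le> real (n ^ j)"
    by (simp only: of_nat_le_iff binomial_fact_pow)
  then show ?thesis by (simp add: field_simps)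
qed

lemma sum_inverse_fact_mult: "(\<Sum>l=0..a. 1 / (fact (a - l) * fact l) :: real) = 2 ^ a / fact a"
proof -
  have "(\<Sum>l=0..a. 1 / (fact (a - l) * fact l) :: real) = (\<Sum>l\<le>a. real (a choose l) / fact a)"
    by (intro sum.cong) (auto simp: binomial_fact atLeast0AtMost)
  also have "\<dots> = 2 ^ a / fact a"
    by (simp add: choose_row_sum flip: sum_divide_distrib of_nat_sum)
  finally show ?thesis .
qed

lemma abs_laguerre_sum_le:
  assumes "0 \<le> x" "x \<le> B" "real n \<le> B"
  shows "\<bar>laguerre_sum a n x\<bar> \<le> (2 * B) ^ a / fact a"
proof -
  have "\<bar>laguerre_sum a n x\<bar> \<le> (\<Sum>l=0..a. \<bar>real (n choose (a - l)) * (- x) ^ l / fact l\<bar>)"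
    unfolding laguerre_sum_def by (rule sum_abs)
  also have "\<dots> \<le> (\<Sum>l=0..a. B ^ a * (1 / (fact (a - l) * fact l)))"
  proof (intro sum_mono)
    fix l assume "l \<in> {0..a}"
    have "\<bar>real (n choose (a - l)) * (- x) ^ l / fact l\<bar> = real (n choose (a - l)) * x ^ l / fact l"
      using assms by (simp add: abs_mult power_abs)
    also have "\<dots> \<le> real n ^ (a - l) / fact (a - l) * x ^ l / fact l"
      using assms choose_le_power_div_fact by (intro divide_right_mono mult_right_mono) auto
    also have "\<dots> \<le> B ^ (a - l) / fact (a - l) * B ^ l / fact l"
      using assms by (intro divide_right_mono mult_mono power_mono) auto
    also have "\<dots> = B ^ a * (1 / (fact (a - l) * fact l))"
      using \<open>l \<in> {0..a}\<close> by (simp flip: power_add)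
    finally show "\<bar>real (n choose (a - l)) * (- x) ^ l / fact l\<bar> \<le> B ^ a * (1 / (fact (a - l) * fact l))" .
  qed
  also have "\<dots> = B ^ a * (\<Sum>l=0..a. 1 / (fact (a - l) * fact l))"
    by (rule sum_distrib_left[symmetric])
  also have "\<dots> = (2 * B) ^ a / fact a"
    by (simp add: sum_inverse_fact_mult power_mult_distrib)
  finally show ?thesis .
qed

lemma laguerre_gamma_density_eq:
  assumes "0 \<le> x"
  shows "laguerre_gamma_density a (Suc n) x
    = fact a / fact n * (laguerre_sum a n x)\<^sup>2 * x powi (int n - int a) * exp (- x)"
  using assms laguerre_eq_laguerre_sum[of a n x]
  by (simp add: laguerre_gamma_density_def power_mult_distrib)

lemma laguerre_gamma_density_le:
  assumes "0 \<le> x" "x \<le> B" "real n \<le> B"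
  shows "laguerre_gamma_density a (Suc n) x
    \<le> 4 ^ a * B ^ (2 * a) / (fact a * fact n) * x powi (int n - int a) * exp (- x)"
proof -
  have "(laguerre_sum a n x)\<^sup>2 \<le> ((2 * B) ^ a / fact a)\<^sup>2"
    using abs_laguerre_sum_le[OF assms, of a] by (metis power2_abs power_mono abs_ge_zero)
  also have "\<dots> = 4 ^ a * B ^ (2 * a) / (fact a)\<^sup>2"
  proof -
    have "((2 * B) ^ a)\<^sup>2 = (2 * B) ^ (2 * a)" by (simp add: power_mult mult.commute)
    also have "\<dots> = 4 ^ a * B ^ (2 * a)" by (simp add: power_mult_distrib power_mult)
    finally show ?thesis by (simp add: power_divide)
  qed
  finally have "fact a / fact n * (laguerre_sum a n x)\<^sup>2 \<le> fact a / fact n * (4 ^ a * B ^ (2 * a) / (fact a)\<^sup>2)"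
    by (intro mult_left_mono) auto
  also have "\<dots> = 4 ^ a * B ^ (2 * a) / (fact a * fact n)"
    by (simp add: power2_eq_square field_simps)
  finally show ?thesis
    unfolding laguerre_gamma_density_eq[OF assms(1)] using assms(1) by (intro mult_right_mono) auto
qed

lemma gamma_density_Suc:
  "0 \<le> x \<Longrightarrow> gamma_density (Suc n) x = x ^ n * exp (- x) / fact n"
  by (simp add: gamma_density_def erlang_density_def)

lemma laguerre_gamma_density_le_upper_tail:
  assumes "1 \<le> k" "real k \<le> x"
  shows "laguerre_gamma_density a k x \<le> 4 ^ a * real k ^ a * gamma_density (k + a) x"
proof -
  obtain n where k: "k = Suc n" using assms(1) by (cases k) auto
  have "0 < x" using assms by linarith
  have "x ^ (2 * a) * x powi (int n - int a) = x ^ (n + a)"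
  proof -
    have "x ^ (2 * a) * x powi (int n - int a) = x powi int (2 * a) * x powi (int n - int a)"
      by (simp only: power_int_of_nat)
    also have "\<dots> = x powi (int (2 * a) + (int n - int a))"
      using \<open>0 < x\<close> by (intro power_int_add[symmetric]) simp
    also have "int (2 * a) + (int n - int a) = int (n + a)" by simp
    finally show ?thesis by (simp only: power_int_of_nat)
  qed
  then have "laguerre_gamma_density a k x \<le> 4 ^ a / (fact a * fact n) * (x ^ (n + a) * exp (- x))"
    using laguerre_gamma_density_le[of x x n a] assms(2) \<open>0 < x\<close> k by (simp add: mult.assoc)
  also have "\<dots> \<le> 4 ^ a * real k ^ a / fact (n + a) * (x ^ (n + a) * exp (- x))"
  proof (intro mult_right_mono)
    have "real (fact (n + a)) \<le> real (fact a * (n + 1) ^ a * fact n)"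
      using fact_add_le by (simp only: of_nat_le_iff)
    then have "fact (n + a) \<le> fact a * real k ^ a * (fact n :: real)"
      unfolding k by (simp add: add.commute)
    then show "4 ^ a / (fact a * fact n) \<le> 4 ^ a * real k ^ a / fact (n + a)"
      by (simp add: divide_simps ac_simps)
  qed (use \<open>0 < x\<close> in auto)
  also have "\<dots> = 4 ^ a * real k ^ a * gamma_density (k + a) x"
    using \<open>0 < x\<close> k by (simp add: gamma_density_Suc)
  finally show ?thesis .
qed

lemma laguerre_gamma_density_le_lower_tail:
  assumes "2 * a + 3 \<le> k" "x \<le> R" "R \<le> real k"
  shows "laguerre_gamma_density a k x \<le> 3 ^ (2 * a + 1) * R ^ (a + 1) * gamma_density (k - 2 * a - 2) x"
proof (cases "0 \<le> x")
  case False
  then show ?thesis by (simp add: laguerre_gamma_density_def gamma_density_def erlang_density_def)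
next
  case True
  obtain d where d: "k = d + 2 * a + 3"
    using assms(1) by (metis le_add_diff_inverse2 add.assoc)
  define n where "n = d + 2 * a + 2"
  have k: "k = Suc n" and gamma_shape: "k - 2 * a - 2 = Suc d" by (simp_all add: d n_def)
  have "int n - int a = int (d + a + 2)" by (simp add: n_def)
  then have "x powi (int n - int a) = x ^ (d + a + 2)"
    by (simp only: power_int_of_nat)
  also have "\<dots> = (x ^ (a + 1) * x) * x ^ d"
    by (simp add: power_add mult_ac)
  finally have powi_eq: "x powi (int n - int a) = (x ^ (a + 1) * x) * x ^ d" .
  have "x ^ (a + 1) * x \<le> R ^ (a + 1) * real k"
    using True assms by (intro mult_mono power_mono) auto
  then have powi_le: "x powi (int n - int a) * exp (- x) \<le> R ^ (a + 1) * real k * (x ^ d * exp (- x))"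
    unfolding powi_eq mult.assoc[of "x ^ (a + 1) * x"] using True by (intro mult_right_mono) auto
  have "laguerre_gamma_density a k x
      \<le> 4 ^ a * real k ^ (2 * a) / (fact a * fact n) * (x powi (int n - int a) * exp (- x))"
    using laguerre_gamma_density_le[of x "real k" n a] True assms k by (simp add: mult.assoc)
  also have "\<dots> \<le> 4 ^ a * real k ^ (2 * a) / (fact a * fact n) * (R ^ (a + 1) * real k * (x ^ d * exp (- x)))"
    using powi_le by (intro mult_left_mono) auto
  also have "\<dots> = 4 ^ a * real k ^ (2 * a + 1) / (fact a * fact n) * R ^ (a + 1) * (x ^ d * exp (- x))"
    by (simp add: mult_ac)
  also have "\<dots> \<le> 3 ^ (2 * a + 1) / fact d * R ^ (a + 1) * (x ^ d * exp (- x))"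
  proof (intro mult_right_mono)
    have "4 ^ a * real k ^ (2 * a + 1) * fact d \<le> 3 ^ (2 * a + 1) * fact a * fact n"
      using lower_tail_constant[of a d] by (simp add: d n_def)
    then show "4 ^ a * real k ^ (2 * a + 1) / (fact a * fact n) \<le> 3 ^ (2 * a + 1) / fact d"
      by (simp add: divide_simps ac_simps)
  qed (use True assms in auto)
  also have "\<dots> = 3 ^ (2 * a + 1) * R ^ (a + 1) * gamma_density (k - 2 * a - 2) x"
    unfolding gamma_shape using True by (simp add: gamma_density_Suc)
  finally show ?thesis .
qed

lemma measure_density_le_cmult:
  fixes f g :: "'a \<Rightarrow> real"
  assumes [measurable]: "f \<in> borel_measurable M" "g \<in> borel_measurable M" "A \<in> sets M"
    and "0 \<le> C" and le: "\<And>x. x \<in> A \<Longrightarrow> f x \<le> C * g x"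
    and finite: "emeasure (density M g) A \<noteq> \<top>"
  shows "measure (density M f) A \<le> C * measure (density M g) A"
proof -
  have "emeasure (density M f) A = (\<integral>\<^sup>+ x. ennreal (f x) * indicator A x \<partial>M)"
    by (rule emeasure_density) auto
  also have "\<dots> \<le> (\<integral>\<^sup>+ x. ennreal C * (ennreal (g x) * indicator A x) \<partial>M)"
    using le \<open>0 \<le> C\<close>
    by (intro nn_integral_mono) (auto simp: indicator_def ennreal_leI simp flip: ennreal_mult')
  also have "\<dots> = ennreal C * emeasure (density M g) A"
    by (simp add: nn_integral_cmult emeasure_density)
  finally have "measure (density M f) A \<le> enn2real (ennreal C * emeasure (density M g) A)"
    unfolding measure_def using finite
    by (intro enn2real_mono) (auto simp: ennreal_mult_less_top top.not_eq_extremum)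
  also have "\<dots> = C * measure (density M g) A"
    using \<open>0 \<le> C\<close> by (simp add: enn2real_mult measure_def)
  finally show ?thesis .
qed

lemma borel_measurable_laguerre_gamma_density [measurable]:
  "laguerre_gamma_density a k \<in> borel_measurable borel"
  unfolding laguerre_gamma_density_def[abs_def] laguerre_def power_int_def by measurable

lemma borel_measurable_gamma_density [measurable]: "gamma_density k \<in> borel_measurable borel"
  unfolding gamma_density_def[abs_def] by measurable

lemma emeasure_gamma_distr_finite: "emeasure (gamma_distr k) A \<noteq> \<top>"
proof -
  interpret prob_space "gamma_distr k"
    unfolding gamma_distr_def gamma_density_def by (rule prob_space_erlang_density) simp
  show ?thesis by (rule emeasure_finite)
qed

theorem lemma4p4:
  fixes \<alpha> :: nat
  shows "(\<forall>(k::nat) (R::real). 1 \<le> k \<longrightarrow> R \<le> real k \<longrightarrow> R > 2 * real \<alpha> + 2 \<longrightarrow>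
            measure (laguerre_gamma_distr \<alpha> k) {..R}
              \<le> 3 ^ (2 * \<alpha> + 1) * R ^ (\<alpha> + 1) * measure (gamma_distr (k - 2 * \<alpha> - 2)) {..R})
       \<and> (\<forall>(k::nat) (R::real). 1 \<le> k \<longrightarrow> real k \<le> R \<longrightarrow>
            measure (laguerre_gamma_distr \<alpha> k) {R..}
              \<le> 4 ^ \<alpha> * real k ^ \<alpha> * measure (gamma_distr (k + \<alpha>)) {R..})"
proof (intro conjI allI impI)
  fix k :: nat and R :: real
  assume "1 \<le> k" "R \<le> real k" "R > 2 * real \<alpha> + 2"
  then have "2 * \<alpha> + 3 \<le> k" by linarith
  then show "measure (laguerre_gamma_distr \<alpha> k) {..R}
      \<le> 3 ^ (2 * \<alpha> + 1) * R ^ (\<alpha> + 1) * measure (gamma_distr (k - 2 * \<alpha> - 2)) {..R}"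
    using \<open>R \<le> real k\<close> \<open>R > 2 * real \<alpha> + 2\<close> emeasure_gamma_distr_finite
    unfolding laguerre_gamma_distr_def gamma_distr_def
    by (intro measure_density_le_cmult laguerre_gamma_density_le_lower_tail) auto
next
  fix k :: nat and R :: real
  assume "1 \<le> k" "real k \<le> R"
  then show "measure (laguerre_gamma_distr \<alpha> k) {R..}
      \<le> 4 ^ \<alpha> * real k ^ \<alpha> * measure (gamma_distr (k + \<alpha>)) {R..}"
    using emeasure_gamma_distr_finite
    unfolding laguerre_gamma_distr_def gamma_distr_def
    by (intro measure_density_le_cmult laguerre_gamma_density_le_upper_tail) auto
qed

end
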